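(* In the $\mathbf N$-agent system described in the context, let $\{\boldsymbol\mu_t^{\mathbf N}\}_{t\ge0}$ be the empirical joint state distributions induced by a policy $\boldsymbol\pi=\{\boldsymbol\pi_t\}_{t\ge0}$. Then for every $t\ge0$, $$\mathbb E\big|\boldsymbol\mu_{t+1}^{\mathbf N}-P^{\mathrm{MF}}(\boldsymbol\mu_t^{\mathbf N},\boldsymbol\pi_t)\big|_1\le C_P\sqrt{|\mathcal X||\mathcal U|}\frac1{N_{\mathrm{pop}}}\Big(\sum_{k\in[K]}\sqrt{N_k}\Big),$$ where $C_P=2+L_P$.
   Context: Fix $K\ge1$, $N_1,\dots,N_K\ge1$, $[K]=\{1,\dots,K\}$, $N_{\mathrm{pop}}=\sum_kN_k$, finite sets $\mathcal X,\mathcal U$, $\mathcal P(A)$ the probability distributions on $A$, $|\cdot|_1$ the $L_1$ norm, $L_P>0$. Agent $j\in[N_k]$ of class $k$ has state $x_{j,k}^t$ and action $u_{j,k}^t$; $\boldsymbol\mu_t^{\mathbf N}(x,k)=\frac1{N_{\mathrm{pop}}}\sum_{j=1}^{N_k}\mathbf 1(x_{j,k}^t=x)$, $\boldsymbol\nu_t^{\mathbf N}(u,k)=\frac1{N_{\mathrm{pop}}}\sum_{j=1}^{N_k}\mathbf 1(u_{j,k}^t=u)$. For each $k$, $P_k:\mathcal X\times\mathcal U\times\mathcal P(\mathcal X\times[K])\times\mathcal P(\mathcal U\times[K])\to\mathcal P(\mathcal X)$ satisfies $|P_k(x,u,\boldsymbol\mu_1,\boldsymbol\nu_1)-P_k(x,u,\boldsymbol\mu_2,\boldsymbol\nu_2)|_1\le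 L_P(|\boldsymbol\mu_1-\boldsymbol\mu_2|_1+|\boldsymbol\nu_1-\boldsymbol\nu_2|_1)$. A policy is $\boldsymbol\pi=\{\boldsymbol\pi_t\}_{t\ge0}$, $\boldsymbol\pi_t=(\pi_k^t)_k$, $\pi_k^t:\mathcal X\times\mathcal P(\mathcal X\times[K])\to\mathcal P(\mathcal U)$. Dynamics: conditioned on all states at time $t$, actions are independent across agents with $u_{j,k}^t\sim\pi_k^t(x_{j,k}^t,\boldsymbol\mu_t^{\mathbf N})$; conditioned on states and actions, next states are independent with $x_{j,k}^{t+1}\sim P_k(x_{j,k}^t,u_{j,k}^t,\boldsymbol\mu_t^{\mathbf N},\boldsymbol\nu_t^{\mathbf N})$. Mean-field: $\nu^{\mathrm{MF}}(\boldsymbol\mu,\boldsymbol\pi)(u,k)=\sum_x\pi_k(x,\boldsymbol\mu)(u)\boldsymbol\mu(x,k)$, $P^{\mathrm{MF}}(\boldsymbol\mu,\boldsymbol\pi)(x',k)=\sum_{x,u}\boldsymbol\mu(x,k)\pi_k(x,\boldsymbol\mu)(u)P_k(x,u,\boldsymbol\mu,\nu^{\mathrm{MF}}(\boldsymbol\mu,\boldsymbol\pi))(x')$. *)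

theory Defs
  imports "HOL-Probability.Probability"
begin

text \<open>Classes are indexed by k < K (i.e. [K] is rendered as {..<K}); agent j of class k
  is the pair (k, j) with j < N k. A joint configuration of states (actions) is a
  function from agents to states (actions); outside the agent set it is "undefined".\<close>

definition agents :: "nat \<Rightarrow> (nat \<Rightarrow> nat) \<Rightarrow> (nat \<times> nat) set" where
  "agents K N = {(k, j). k < K \<and> j < N k}"

definition Npop :: "nat \<Rightarrow> (nat \<Rightarrow> nat) \<Rightarrow> nat" where
  "Npop K N = (\<Sum>k<K. N k)"

definition empirical :: "nat \<Rightarrow> (nat \<Rightarrow> nat) \<Rightarrow> (nat \<times> nat \<Rightarrow> 'a) \<Rightarrow> ('a \<times> nat \<Rightarrow> real)" where
  "empirical K N s = (\<lambda>(x, k). if k < K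
      then real (card {j. j < N k \<and> s (k, j) = x}) / real (Npop K N) else 0)"

definition is_dist :: "nat \<Rightarrow> ('a::finite \<times> nat \<Rightarrow> real) \<Rightarrow> bool" where
  "is_dist K m \<longleftrightarrow> (\<forall>p. 0 \<le> m p) \<and> (\<forall>x k. K \<le> k \<longrightarrow> m (x, k) = 0)
      \<and> (\<Sum>p\<in>(UNIV::'a set) \<times> {..<K}. m p) = 1"

definition l1 :: "nat \<Rightarrow> ('a::finite \<times> nat \<Rightarrow> real) \<Rightarrow> ('a \<times> nat \<Rightarrow> real) \<Rightarrow> real" where
  "l1 K m1 m2 = (\<Sum>p\<in>(UNIV::'a set) \<times> {..<K}. \<bar>m1 p - m2 p\<bar>)"

definition l1_pmf :: "'a::finite pmf \<Rightarrow> 'a pmf \<Rightarrow> real" where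
  "l1_pmf p q = (\<Sum>x\<in>UNIV. \<bar>pmf p x - pmf q x\<bar>)"

text \<open>Mean-field maps. pol k x mu is the class-k policy; P k x u mu nu the class-k kernel.\<close>
definition nu_MF :: "nat \<Rightarrow> ('x \<times> nat \<Rightarrow> real) \<Rightarrow> (nat \<Rightarrow> 'x \<Rightarrow> ('x \<times> nat \<Rightarrow> real) \<Rightarrow> 'u pmf)
    \<Rightarrow> ('u \<times> nat \<Rightarrow> real)" where
  "nu_MF K mu pol = (\<lambda>(u, k). if k < K then (\<Sum>x\<in>UNIV. pmf (pol k x mu) u * mu (x, k)) else 0)"

definition P_MF :: "nat \<Rightarrow> (nat \<Rightarrow> 'x \<Rightarrow> 'u \<Rightarrow> ('x \<times> nat \<Rightarrow> real) \<Rightarrow> ('u \<times> nat \<Rightarrow> real) \<Rightarrow> 'x pmf)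
    \<Rightarrow> ('x \<times> nat \<Rightarrow> real) \<Rightarrow> (nat \<Rightarrow> 'x \<Rightarrow> ('x \<times> nat \<Rightarrow> real) \<Rightarrow> 'u pmf) \<Rightarrow> ('x \<times> nat \<Rightarrow> real)" where
  "P_MF K P mu pol = (\<lambda>(x', k). if k < K then
      (\<Sum>x\<in>UNIV. \<Sum>u\<in>UNIV. mu (x, k) * pmf (pol k x mu) u * pmf (P k x u mu (nu_MF K mu pol)) x')
      else 0)"

definition step :: "nat \<Rightarrow> (nat \<Rightarrow> nat) \<Rightarrow> (nat \<Rightarrow> 'x \<Rightarrow> 'u \<Rightarrow> ('x \<times> nat \<Rightarrow> real) \<Rightarrow> ('u \<times> nat \<Rightarrow> real) \<Rightarrow> 'x pmf)
    \<Rightarrow> (nat \<Rightarrow> nat \<Rightarrow> 'x \<Rightarrow> ('x \<times> nat \<Rightarrow> real) \<Rightarrow> 'u pmf) \<Rightarrow> nat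
    \<Rightarrow> (nat \<times> nat \<Rightarrow> 'x) \<Rightarrow> (nat \<times> nat \<Rightarrow> 'x) pmf" where
  "step K N P pol t s =
     Pi_pmf (agents K N) undefined (\<lambda>a. pol t (fst a) (s a) (empirical K N s)) \<bind>
       (\<lambda>act. Pi_pmf (agents K N) undefined
          (\<lambda>a. P (fst a) (s a) (act a) (empirical K N s) (empirical K N act)))"

primrec config_law :: "nat \<Rightarrow> (nat \<Rightarrow> nat) \<Rightarrow> (nat \<Rightarrow> 'x \<Rightarrow> 'u \<Rightarrow> ('x \<times> nat \<Rightarrow> real) \<Rightarrow> ('u \<times> nat \<Rightarrow> real) \<Rightarrow> 'x pmf)
    \<Rightarrow> (nat \<Rightarrow> nat \<Rightarrow> 'x \<Rightarrow> ('x \<times> nat \<Rightarrow> real) \<Rightarrow> 'u pmf) \<Rightarrow> (nat \<times> nat \<Rightarrow> 'x) pmf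
    \<Rightarrow> nat \<Rightarrow> (nat \<times> nat \<Rightarrow> 'x) pmf" where
  "config_law K N P pol init 0 = init"
| "config_law K N P pol init (Suc t) = config_law K N P pol init t \<bind> step K N P pol t"

definition pair_law where
  "pair_law K N P pol init t =
     config_law K N P pol init t \<bind> (\<lambda>s. map_pmf (\<lambda>s'. (s, s')) (step K N P pol t s))"

end

theory Submission
  imports Defs
begin

text \<open>Given the configuration at time t, actions and then next states are sampled
  independently across agents. For independent samples, the expected L1 distance between
  the empirical distribution of a class of size N_k on a finite set C and its mean is at
  most sqrt (|C| N_k) / N_pop: coordinatewise this is the standard deviation of a sum of
  independent centred terms, and Cauchy-Schwarz sums over C. The mean-field prediction
  differs from the mean of the next empirical state distribution only because the kernels
  are evaluated at the mean-field instead of the empirical action distribution and the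
  actions are averaged out. The error therefore splits into the next-state sampling error
  (sqrt |X|), L_P times the action sampling error (sqrt |U|), and the action sampling
  error inside the kernels (sqrt |X|); conditioning on the configuration at time t and
  sqrt |X|, sqrt |U| <= sqrt (|X| |U|) give the claim.\<close>

lemma finite_set_Pi_pmf:
  "finite A \<Longrightarrow> finite (set_pmf (Pi_pmf A d (p :: 'i \<Rightarrow> 'b::finite pmf)))"
  by (simp add: set_Pi_pmf finite_PiE_dflt)

lemma expectation_bind_pmf_finite:
  fixes f :: "'b \<Rightarrow> real"
  assumes "finite (set_pmf M)" "\<And>x. x \<in> set_pmf M \<Longrightarrow> finite (set_pmf (N x))"
  shows "measure_pmf.expectation (M \<bind> N) f
       = measure_pmf.expectation M (\<lambda>x. measure_pmf.expectation (N x) f)"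
proof -
  have "measure_pmf.expectation (M \<bind> N) f
      = (\<Sum>a\<in>set_pmf M. pmf M a *\<^sub>R measure_pmf.expectation (N a) f)"
    using assms by (intro pmf_expectation_bind) auto
  also have "\<dots> = measure_pmf.expectation M (\<lambda>x. measure_pmf.expectation (N x) f)"
    using assms by (subst integral_measure_pmf_real[of "set_pmf M"]) (auto simp: mult.commute)
  finally show ?thesis .
qed

lemma expectation_bind_pmf_le:
  fixes f :: "'b \<Rightarrow> real"
  assumes "\<And>y. 0 \<le> f y" "0 \<le> C"
    and "\<And>x. x \<in> set_pmf M \<Longrightarrow> integrable (measure_pmf (N x)) f"
    and "\<And>x. x \<in> set_pmf M \<Longrightarrow> measure_pmf.expectation (N x) f \<le> C"
  shows "measure_pmf.expectation (M \<bind> N) f \<le> C"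
proof (rule integral_real_bounded[OF assms(2)])
  have "(\<integral>\<^sup>+x. (\<integral>\<^sup>+y. ennreal (f y) \<partial>N x) \<partial>M) \<le> (\<integral>\<^sup>+x. ennreal C \<partial>M)"
  proof (rule nn_integral_mono_AE, unfold AE_measure_pmf_iff, intro ballI)
    fix x assume x: "x \<in> set_pmf M"
    have "(\<integral>\<^sup>+y. ennreal (f y) \<partial>N x) = ennreal (measure_pmf.expectation (N x) f)"
      using assms(1) assms(3)[OF x] by (intro nn_integral_eq_integral) auto
    also have "\<dots> \<le> ennreal C" using assms(4)[OF x] by (rule ennreal_leI)
    finally show "(\<integral>\<^sup>+y. ennreal (f y) \<partial>N x) \<le> ennreal C" .
  qed
  then show "(\<integral>\<^sup>+y. ennreal (f y) \<partial>measure_pmf (M \<bind> N)) \<le> ennreal C"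
    by (simp add: measure_pmf.emeasure_space_1)
qed

lemma expectation_abs_le_sqrt_expectation_square:
  fixes X :: "'a \<Rightarrow> real"
  assumes "finite (set_pmf M)"
  shows "measure_pmf.expectation M (\<lambda>x. \<bar>X x\<bar>) \<le> sqrt (measure_pmf.expectation M (\<lambda>x. (X x)\<^sup>2))"
proof -
  have "0 \<le> measure_pmf.variance M (\<lambda>x. \<bar>X x\<bar>)" by (rule measure_pmf.variance_positive)
  also have "\<dots> = measure_pmf.expectation M (\<lambda>x. (X x)\<^sup>2) - (measure_pmf.expectation M (\<lambda>x. \<bar>X x\<bar>))\<^sup>2"
    by (subst measure_pmf.variance_eq) (auto simp: integrable_measure_pmf_finite[OF assms])
  finally show ?thesis by (intro real_le_rsqrt) simp
qed

lemma expectation_centered_square_le: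
  fixes f :: "'b::finite \<Rightarrow> real"
  shows "measure_pmf.expectation M (\<lambda>y. (f y - measure_pmf.expectation M f)\<^sup>2)
       \<le> measure_pmf.expectation M (\<lambda>y. (f y)\<^sup>2)"
  using measure_pmf.variance_eq[of M f] by (simp add: integrable_measure_pmf_finite)

lemma expectation_Pi_pmf_sum_square:
  fixes h :: "'i \<Rightarrow> 'b::finite \<Rightarrow> real"
  assumes "finite A" "\<And>i. i \<in> A \<Longrightarrow> measure_pmf.expectation (p i) (h i) = 0"
  shows "measure_pmf.expectation (Pi_pmf A d p) (\<lambda>f. (\<Sum>i\<in>A. h i (f i))\<^sup>2)
       = (\<Sum>i\<in>A. measure_pmf.expectation (p i) (\<lambda>y. (h i y)\<^sup>2))"
  using assms
proof (induction A rule: finite_induct)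
  case empty
  then show ?case by simp
next
  case (insert a A)
  let ?M = "Pi_pmf A d p"
  define S where "S f = (\<Sum>i\<in>A. h i (f i))" for f
  have fin: "finite (set_pmf ?M)" using insert.hyps(1) by (rule finite_set_Pi_pmf)
  note integrable = integrable_measure_pmf_finite[OF fin]
  have mean_S: "measure_pmf.expectation ?M S = 0"
  proof -
    have "measure_pmf.expectation ?M S
        = (\<Sum>i\<in>A. measure_pmf.expectation (map_pmf (\<lambda>f. f i) ?M) (h i))"
      unfolding S_def by (subst Bochner_Integration.integral_sum) (auto simp: integrable)
    also have "\<dots> = 0"
      using insert by (intro sum.neutral) (simp add: Pi_pmf_component)
    finally show ?thesis .
  qed
  have sum_upd: "(\<Sum>i\<in>insert a A. h i ((f(a := y)) i)) = h a y + S f" for f y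
  proof -
    have "(\<Sum>i\<in>A. h i ((f(a := y)) i)) = S f"
      unfolding S_def using insert.hyps(2) by (intro sum.cong refl) auto
    then show ?thesis using insert.hyps by simp
  qed
  have inner: "measure_pmf.expectation ?M (\<lambda>f. (h a y + S f)\<^sup>2)
      = (h a y)\<^sup>2 + measure_pmf.expectation ?M (\<lambda>f. (S f)\<^sup>2)" for y
  proof -
    have "measure_pmf.expectation ?M (\<lambda>f. (h a y + S f)\<^sup>2)
        = (h a y)\<^sup>2 + 2 * h a y * measure_pmf.expectation ?M S
          + measure_pmf.expectation ?M (\<lambda>f. (S f)\<^sup>2)"
      by (simp add: power2_sum integrable)
    then show ?thesis by (simp add: mean_S)
  qed
  have Pi_insert: "Pi_pmf (insert a A) d p = p a \<bind> (\<lambda>y. map_pmf (\<lambda>f. f(a := y)) ?M)"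
    using insert.hyps by (simp add: Pi_pmf_insert' map_pmf_def)
  have "measure_pmf.expectation (Pi_pmf (insert a A) d p) (\<lambda>f. (\<Sum>i\<in>insert a A. h i (f i))\<^sup>2)
      = measure_pmf.expectation (p a)
          (\<lambda>y. measure_pmf.expectation ?M (\<lambda>f. (\<Sum>i\<in>insert a A. h i ((f(a := y)) i))\<^sup>2))"
    unfolding Pi_insert by (subst expectation_bind_pmf_finite) (auto intro: fin)
  also have "\<dots> = measure_pmf.expectation (p a)
      (\<lambda>y. measure_pmf.expectation ?M (\<lambda>f. (h a y + S f)\<^sup>2))"
    by (simp only: sum_upd)
  also have "\<dots> = measure_pmf.expectation (p a) (\<lambda>y. (h a y)\<^sup>2)
      + measure_pmf.expectation ?M (\<lambda>f. (S f)\<^sup>2)"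
    by (simp add: inner integrable_measure_pmf_finite)
  also have "measure_pmf.expectation ?M (\<lambda>f. (S f)\<^sup>2)
      = (\<Sum>i\<in>A. measure_pmf.expectation (p i) (\<lambda>y. (h i y)\<^sup>2))"
    unfolding S_def using insert by simp
  finally show ?case using insert.hyps by simp
qed

lemma sum_sqrt_le_sqrt_card_mult_sum:
  fixes v :: "'c \<Rightarrow> real"
  assumes "\<And>c. c \<in> C \<Longrightarrow> 0 \<le> v c"
  shows "(\<Sum>c\<in>C. sqrt (v c)) \<le> sqrt (real (card C) * (\<Sum>c\<in>C. v c))"
proof (rule real_le_rsqrt)
  have "(\<Sum>c\<in>C. 1 * sqrt (v c))\<^sup>2 \<le> (\<Sum>c\<in>C. 1\<^sup>2) * (\<Sum>c\<in>C. (sqrt (v c))\<^sup>2)"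
    by (rule Cauchy_Schwarz_ineq_sum)
  also have "(\<Sum>c\<in>C. (sqrt (v c))\<^sup>2) = (\<Sum>c\<in>C. v c)"
    using assms by (intro sum.cong) auto
  finally show "(\<Sum>c\<in>C. sqrt (v c))\<^sup>2 \<le> real (card C) * (\<Sum>c\<in>C. v c)" by simp
qed

lemma expectation_Pi_pmf_l1_deviation_le:
  fixes g :: "'i \<Rightarrow> 'b::finite \<Rightarrow> 'c::finite \<Rightarrow> real"
  assumes A: "finite A" and "B \<subseteq> A"
    and unit: "\<And>i y. i \<in> B \<Longrightarrow> (\<Sum>c\<in>UNIV. (g i y c)\<^sup>2) \<le> 1"
  shows "measure_pmf.expectation (Pi_pmf A d p)
      (\<lambda>\<omega>. \<Sum>c\<in>UNIV. \<bar>\<Sum>i\<in>B. g i (\<omega> i) c - measure_pmf.expectation (p i) (\<lambda>y. g i y c)\<bar>)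
    \<le> sqrt (real (CARD('c) * card B))"
proof -
  let ?M = "Pi_pmf A d p"
  define h where "h i y c = (if i \<in> B
      then g i y c - measure_pmf.expectation (p i) (\<lambda>y. g i y c) else 0)" for i y c
  have fin: "finite (set_pmf ?M)" using A by (rule finite_set_Pi_pmf)
  have sum_h: "(\<Sum>i\<in>B. g i (\<omega> i) c - measure_pmf.expectation (p i) (\<lambda>y. g i y c))
      = (\<Sum>i\<in>A. h i (\<omega> i) c)" for \<omega> c
    unfolding h_def using A \<open>B \<subseteq> A\<close> by (simp add: sum.If_cases Int_absorb1 Int_commute)
  have mean_h: "measure_pmf.expectation (p i) (\<lambda>y. h i y c) = 0" for i c
    unfolding h_def by (cases "i \<in> B") (auto simp: integrable_measure_pmf_finite)
  have variance_h: "(\<Sum>c\<in>UNIV. measure_pmf.expectation (p i) (\<lambda>y. (h i y c)\<^sup>2))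
      \<le> (if i \<in> B then 1 else 0)" for i
  proof (cases "i \<in> B")
    case True
    have "(\<Sum>c\<in>UNIV. measure_pmf.expectation (p i) (\<lambda>y. (h i y c)\<^sup>2))
        \<le> (\<Sum>c\<in>UNIV. measure_pmf.expectation (p i) (\<lambda>y. (g i y c)\<^sup>2))"
      unfolding h_def using True by (intro sum_mono) (simp add: expectation_centered_square_le)
    also have "\<dots> = measure_pmf.expectation (p i) (\<lambda>y. \<Sum>c\<in>UNIV. (g i y c)\<^sup>2)"
      by (subst Bochner_Integration.integral_sum) (auto simp: integrable_measure_pmf_finite)
    also have "\<dots> \<le> measure_pmf.expectation (p i) (\<lambda>_. 1)"
      using unit[OF True] by (intro integral_mono) (auto simp: integrable_measure_pmf_finite)
    finally show ?thesis using True by simp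
  qed (simp add: h_def)
  have "measure_pmf.expectation ?M
      (\<lambda>\<omega>. \<Sum>c\<in>UNIV. \<bar>\<Sum>i\<in>B. g i (\<omega> i) c - measure_pmf.expectation (p i) (\<lambda>y. g i y c)\<bar>)
    = (\<Sum>c\<in>UNIV. measure_pmf.expectation ?M (\<lambda>\<omega>. \<bar>\<Sum>i\<in>A. h i (\<omega> i) c\<bar>))"
    unfolding sum_h
    by (rule Bochner_Integration.integral_sum) (simp add: integrable_measure_pmf_finite[OF fin])
  also have "\<dots> \<le> (\<Sum>c\<in>UNIV. sqrt (measure_pmf.expectation ?M (\<lambda>\<omega>. (\<Sum>i\<in>A. h i (\<omega> i) c)\<^sup>2)))"
    by (intro sum_mono expectation_abs_le_sqrt_expectation_square fin)
  also have "\<dots> = (\<Sum>c\<in>UNIV. sqrt (\<Sum>i\<in>A. measure_pmf.expectation (p i) (\<lambda>y. (h i y c)\<^sup>2)))"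
    using A mean_h
    by (intro sum.cong refl arg_cong[where f = sqrt]
        expectation_Pi_pmf_sum_square[where h = "\<lambda>i y. h i y c" for c])
  also have "\<dots> \<le> sqrt (real CARD('c)
      * (\<Sum>c\<in>UNIV. \<Sum>i\<in>A. measure_pmf.expectation (p i) (\<lambda>y. (h i y c)\<^sup>2)))"
    by (intro sum_sqrt_le_sqrt_card_mult_sum sum_nonneg) auto
  also have "\<dots> \<le> sqrt (real CARD('c) * (\<Sum>i\<in>A. if i \<in> B then 1 else 0))"
    by (subst sum.swap) (intro real_sqrt_le_mono mult_left_mono sum_mono variance_h; simp)
  also have "(\<Sum>i\<in>A. if i \<in> B then 1 else 0 :: real) = real (card B)"
    using A \<open>B \<subseteq> A\<close> by (simp add: sum.If_cases Int_absorb1)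
  finally show ?thesis by simp
qed

text \<open>Empirical distributions, and both mean-field maps evaluated at an empirical state
  distribution, are of this form.\<close>
definition population_mix :: "nat \<Rightarrow> (nat \<Rightarrow> nat) \<Rightarrow> (nat \<times> nat \<Rightarrow> 'c \<Rightarrow> real) \<Rightarrow> ('c \<times> nat \<Rightarrow> real)"
  where "population_mix K N w =
    (\<lambda>(c, k). if k < K then (\<Sum>j<N k. w (k, j) c) / real (Npop K N) else 0)"

lemma finite_agents: "finite (agents K N)"
proof -
  have "agents K N = Sigma {..<K} (\<lambda>k. {..<N k})" by (auto simp: agents_def)
  then show ?thesis by simp
qed

lemma l1_triangle: "l1 K a (c :: 'c::finite \<times> nat \<Rightarrow> real) \<le> l1 K a b + l1 K b c"
  unfolding l1_def sum.distrib[symmetric] by (intro sum_mono) linarith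

lemma l1_nonneg: "0 \<le> l1 K a (b :: 'c::finite \<times> nat \<Rightarrow> real)"
  unfolding l1_def by (intro sum_nonneg) auto

lemma l1_population_mix:
  "l1 K (population_mix K N w1) (population_mix K N (w2 :: _ \<Rightarrow> 'c::finite \<Rightarrow> real))
   = (\<Sum>k<K. \<Sum>c\<in>UNIV. \<bar>\<Sum>j<N k. w1 (k, j) c - w2 (k, j) c\<bar>) / real (Npop K N)"
proof -
  have "l1 K (population_mix K N w1) (population_mix K N w2)
      = (\<Sum>c\<in>UNIV. \<Sum>k<K. \<bar>population_mix K N w1 (c, k) - population_mix K N w2 (c, k)\<bar>)"
    unfolding l1_def by (simp add: sum.cartesian_product)
  also have "\<dots> = (\<Sum>c\<in>UNIV. \<Sum>k<K. \<bar>\<Sum>j<N k. w1 (k, j) c - w2 (k, j) c\<bar> / real (Npop K N))"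
    by (intro sum.cong refl)
      (simp add: population_mix_def diff_divide_distrib[symmetric] sum_subtractf)
  also have "\<dots> = (\<Sum>k<K. \<Sum>c\<in>UNIV. \<bar>\<Sum>j<N k. w1 (k, j) c - w2 (k, j) c\<bar>) / real (Npop K N)"
    by (subst sum.swap) (simp add: sum_divide_distrib)
  finally show ?thesis .
qed

lemma is_dist_population_mix:
  fixes w :: "nat \<times> nat \<Rightarrow> 'c::finite \<Rightarrow> real"
  assumes "Npop K N > 0" "\<And>a c. 0 \<le> w a c"
    and "\<And>k j. k < K \<Longrightarrow> j < N k \<Longrightarrow> (\<Sum>c\<in>UNIV. w (k, j) c) = 1"
  shows "is_dist K (population_mix K N w)"
proof -
  have "(\<Sum>p\<in>(UNIV::'c set) \<times> {..<K}. population_mix K N w p)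
      = (\<Sum>c\<in>UNIV. \<Sum>k<K. population_mix K N w (c, k))"
    by (subst sum.cartesian_product) (simp add: case_prod_eta)
  also have "\<dots> = (\<Sum>k<K. \<Sum>c\<in>UNIV. population_mix K N w (c, k))"
    by (rule sum.swap)
  also have "\<dots> = (\<Sum>k<K. (\<Sum>c\<in>UNIV. \<Sum>j<N k. w (k, j) c) / real (Npop K N))"
    by (intro sum.cong refl) (simp add: population_mix_def sum_divide_distrib)
  also have "\<dots> = (\<Sum>k<K. real (N k)) / real (Npop K N)"
    unfolding sum_divide_distrib using assms(3)
    by (intro sum.cong refl) (subst sum.swap, simp flip: sum_divide_distrib)
  also have "\<dots> = real (Npop K N) / real (Npop K N)" by (simp add: Npop_def)
  also have "\<dots> = 1" using assms(1) by simp
  finally show ?thesis using assms unfolding is_dist_def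
    by (auto simp: population_mix_def intro!: divide_nonneg_nonneg sum_nonneg)
qed

lemma empirical_eq_population_mix:
  "empirical K N s = population_mix K N (\<lambda>a c. if s a = c then 1 else 0)"
proof (intro ext, clarify)
  fix c k
  have "real (card {j. j < N k \<and> s (k, j) = c}) = (\<Sum>j<N k. if s (k, j) = c then 1 else 0)"
    by (simp add: sum.If_cases Int_def conj_commute)
  then show "empirical K N s (c, k) = population_mix K N (\<lambda>a c. if s a = c then 1 else 0) (c, k)"
    unfolding empirical_def population_mix_def by simp
qed

lemma sum_empirical_mult:
  fixes f :: "'x::finite \<Rightarrow> real"
  assumes "k < K"
  shows "(\<Sum>x\<in>UNIV. empirical K N s (x, k) * f x) = (\<Sum>j<N k. f (s (k, j))) / real (Npop K N)"
proof -
  have "(\<Sum>x\<in>UNIV. empirical K N s (x, k) * f x)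
      = (\<Sum>x\<in>UNIV. \<Sum>j<N k. if s (k, j) = x then f x else 0) / real (Npop K N)"
    using assms unfolding empirical_eq_population_mix population_mix_def sum_divide_distrib
    by (auto simp: sum_distrib_right intro!: sum.cong)
  also have "\<dots> = (\<Sum>j<N k. f (s (k, j))) / real (Npop K N)"
    by (subst sum.swap) simp
  finally show ?thesis .
qed

lemma nu_MF_empirical:
  fixes pol :: "nat \<Rightarrow> 'x::finite \<Rightarrow> ('x \<times> nat \<Rightarrow> real) \<Rightarrow> 'u pmf"
  shows "nu_MF K (empirical K N s) pol
       = population_mix K N (\<lambda>a. pmf (pol (fst a) (s a) (empirical K N s)))"
proof (intro ext, clarify)
  fix u k
  show "nu_MF K (empirical K N s) pol (u, k)
      = population_mix K N (\<lambda>a. pmf (pol (fst a) (s a) (empirical K N s))) (u, k)"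
    using sum_empirical_mult[of k K N s "\<lambda>x. pmf (pol k x (empirical K N s)) u"]
    by (cases "k < K") (simp_all add: nu_MF_def population_mix_def mult.commute)
qed

lemma P_MF_empirical:
  fixes K :: nat and N :: "nat \<Rightarrow> nat" and s :: "nat \<times> nat \<Rightarrow> 'x::finite"
    and pol :: "nat \<Rightarrow> 'x \<Rightarrow> ('x \<times> nat \<Rightarrow> real) \<Rightarrow> 'u::finite pmf"
  defines "\<mu> \<equiv> empirical K N s"
  shows "P_MF K P \<mu> pol = population_mix K N (\<lambda>a x'.
      measure_pmf.expectation (pol (fst a) (s a) \<mu>)
        (\<lambda>u. pmf (P (fst a) (s a) u \<mu> (nu_MF K \<mu> pol)) x'))"
proof (intro ext, clarify)
  fix x' k
  have expectation_sum: "measure_pmf.expectation q f = (\<Sum>u\<in>UNIV. pmf q u * f u)"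
    for q :: "'u pmf" and f :: "'u \<Rightarrow> real"
    by (subst integral_measure_pmf_real[of UNIV]) (auto simp: mult.commute)
  show "P_MF K P \<mu> pol (x', k) = population_mix K N (\<lambda>a x'.
      measure_pmf.expectation (pol (fst a) (s a) \<mu>)
        (\<lambda>u. pmf (P (fst a) (s a) u \<mu> (nu_MF K \<mu> pol)) x')) (x', k)"
    using sum_empirical_mult[of k K N s "\<lambda>x. \<Sum>u\<in>UNIV. pmf (pol k x \<mu>) u
         * pmf (P k x u \<mu> (nu_MF K \<mu> pol)) x'"]
    by (cases "k < K")
      (simp_all add: P_MF_def population_mix_def expectation_sum sum_distrib_left mult.assoc \<mu>_def)
qed

lemma expectation_l1_population_mix_le:
  fixes g :: "nat \<times> nat \<Rightarrow> 'b::finite \<Rightarrow> 'c::finite \<Rightarrow> real"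
  assumes unit: "\<And>k j y. k < K \<Longrightarrow> j < N k \<Longrightarrow> (\<Sum>c\<in>UNIV. (g (k, j) y c)\<^sup>2) \<le> 1"
  shows "measure_pmf.expectation (Pi_pmf (agents K N) d p)
      (\<lambda>\<omega>. l1 K (population_mix K N (\<lambda>a. g a (\<omega> a)))
                 (population_mix K N (\<lambda>a c. measure_pmf.expectation (p a) (\<lambda>y. g a y c))))
    \<le> sqrt (real CARD('c)) * (\<Sum>k<K. sqrt (real (N k))) / real (Npop K N)"
proof -
  let ?M = "Pi_pmf (agents K N) d p"
  let ?dev = "\<lambda>k \<omega>. \<Sum>c\<in>UNIV. \<bar>\<Sum>j<N k. g (k, j) (\<omega> (k, j)) c
      - measure_pmf.expectation (p (k, j)) (\<lambda>y. g (k, j) y c)\<bar>"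
  have fin: "finite (set_pmf ?M)" by (rule finite_set_Pi_pmf[OF finite_agents])
  have class_bound: "measure_pmf.expectation ?M (?dev k) \<le> sqrt (real (CARD('c) * N k))"
    if "k < K" for k
  proof -
    have inj: "inj_on (Pair k) {..<N k}" by (auto simp: inj_on_def)
    have "measure_pmf.expectation ?M (?dev k)
        = measure_pmf.expectation ?M (\<lambda>\<omega>. \<Sum>c\<in>UNIV. \<bar>\<Sum>i\<in>Pair k ` {..<N k}. g i (\<omega> i) c
            - measure_pmf.expectation (p i) (\<lambda>y. g i y c)\<bar>)"
      by (simp add: sum.reindex[OF inj])
    also have "\<dots> \<le> sqrt (real (CARD('c) * card (Pair k ` {..<N k})))"
      using \<open>k < K\<close> unit
      by (intro expectation_Pi_pmf_l1_deviation_le finite_agents) (auto simp: agents_def)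
    finally show ?thesis by (simp add: card_image[OF inj])
  qed
  have "measure_pmf.expectation ?M
      (\<lambda>\<omega>. l1 K (population_mix K N (\<lambda>a. g a (\<omega> a)))
                 (population_mix K N (\<lambda>a c. measure_pmf.expectation (p a) (\<lambda>y. g a y c))))
    = (\<Sum>k<K. measure_pmf.expectation ?M (?dev k)) / real (Npop K N)"
    unfolding l1_population_mix
    by (subst integral_divide_zero, subst Bochner_Integration.integral_sum)
      (auto simp: integrable_measure_pmf_finite[OF fin])
  also have "\<dots> \<le> (\<Sum>k<K. sqrt (real (CARD('c) * N k))) / real (Npop K N)"
    by (intro divide_right_mono sum_mono class_bound) auto
  finally show ?thesis by (simp add: real_sqrt_mult sum_distrib_left)
qed

lemma expectation_l1_empirical_Pi_pmf_le:
  fixes q :: "nat \<times> nat \<Rightarrow> 'c::finite pmf"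
  shows "measure_pmf.expectation (Pi_pmf (agents K N) d q) (\<lambda>\<omega>. l1 K (empirical K N \<omega>) m)
    \<le> sqrt (real CARD('c)) * (\<Sum>k<K. sqrt (real (N k))) / real (Npop K N)
      + l1 K (population_mix K N (\<lambda>a. pmf (q a))) m"
proof -
  let ?M = "Pi_pmf (agents K N) d q" and ?mean = "population_mix K N (\<lambda>a. pmf (q a))"
  have indicator_mean: "measure_pmf.expectation (q a) (\<lambda>y. if y = c then 1 else 0) = pmf (q a) c"
    for a c
    by (subst integral_measure_pmf_real[of "{c}"]) (auto split: if_splits)
  have indicator_unit: "(\<Sum>c\<in>UNIV. (if y = c then 1 else 0 :: real)\<^sup>2) \<le> 1" for y :: 'c
    by (simp add: if_distrib[of "\<lambda>x. x\<^sup>2"] cong: if_cong)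
  have integrable: "integrable ?M f" for f :: "_ \<Rightarrow> real"
    by (rule integrable_measure_pmf_finite[OF finite_set_Pi_pmf[OF finite_agents]])
  have "measure_pmf.expectation ?M (\<lambda>\<omega>. l1 K (empirical K N \<omega>) m)
      \<le> measure_pmf.expectation ?M (\<lambda>\<omega>. l1 K (empirical K N \<omega>) ?mean + l1 K ?mean m)"
    by (intro integral_mono integrable l1_triangle)
  also have "\<dots> = measure_pmf.expectation ?M (\<lambda>\<omega>. l1 K (empirical K N \<omega>) ?mean) + l1 K ?mean m"
    by (simp add: integrable)
  also have "measure_pmf.expectation ?M (\<lambda>\<omega>. l1 K (empirical K N \<omega>) ?mean)
      \<le> sqrt (real CARD('c)) * (\<Sum>k<K. sqrt (real (N k))) / real (Npop K N)"
    using expectation_l1_population_mix_le[of K N "\<lambda>a y c. if y = c then 1 else 0" d q]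
    by (simp add: empirical_eq_population_mix indicator_mean indicator_unit)
  finally show ?thesis by simp
qed

lemma l1_population_mix_pmf_le:
  fixes q1 q2 :: "nat \<times> nat \<Rightarrow> 'c::finite pmf"
  assumes "0 \<le> \<delta>" and "\<And>k j. k < K \<Longrightarrow> j < N k \<Longrightarrow> l1_pmf (q1 (k, j)) (q2 (k, j)) \<le> \<delta>"
  shows "l1 K (population_mix K N (\<lambda>a. pmf (q1 a))) (population_mix K N (\<lambda>a. pmf (q2 a))) \<le> \<delta>"
proof -
  have class_bound: "(\<Sum>c\<in>UNIV. \<bar>\<Sum>j<N k. pmf (q1 (k, j)) c - pmf (q2 (k, j)) c\<bar>) \<le> real (N k) * \<delta>"
    if "k < K" for k
  proof -
    have "(\<Sum>c\<in>UNIV. \<bar>\<Sum>j<N k. pmf (q1 (k, j)) c - pmf (q2 (k, j)) c\<bar>)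
        \<le> (\<Sum>j<N k. l1_pmf (q1 (k, j)) (q2 (k, j)))"
      unfolding l1_pmf_def by (subst sum.swap) (intro sum_mono sum_abs)
    also have "\<dots> \<le> (\<Sum>j<N k. \<delta>)" using assms(2) \<open>k < K\<close> by (intro sum_mono) auto
    finally show ?thesis by simp
  qed
  have "l1 K (population_mix K N (\<lambda>a. pmf (q1 a))) (population_mix K N (\<lambda>a. pmf (q2 a)))
      \<le> (\<Sum>k<K. real (N k) * \<delta>) / real (Npop K N)"
    unfolding l1_population_mix by (intro divide_right_mono sum_mono class_bound) auto
  also have "\<dots> = real (Npop K N) * \<delta> / real (Npop K N)"
    by (simp add: Npop_def sum_distrib_right)
  also have "\<dots> \<le> \<delta>" using assms(1) by simp
  finally show ?thesis .
qed

lemma l1_population_mix_kernel_le: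
  fixes P :: "nat \<Rightarrow> 'x \<Rightarrow> 'u \<Rightarrow> ('x::finite \<times> nat \<Rightarrow> real) \<Rightarrow> ('u::finite \<times> nat \<Rightarrow> real) \<Rightarrow> 'x pmf"
  assumes "0 \<le> L"
    and lipschitz: "\<And>k x u mu1 mu2 nu1 nu2. k < K \<Longrightarrow> is_dist K mu1 \<Longrightarrow> is_dist K mu2 \<Longrightarrow>
           is_dist K nu1 \<Longrightarrow> is_dist K nu2 \<Longrightarrow>
           l1_pmf (P k x u mu1 nu1) (P k x u mu2 nu2) \<le> L * (l1 K mu1 mu2 + l1 K nu1 nu2)"
    and "is_dist K \<mu>" "is_dist K \<nu>1" "is_dist K \<nu>2"
  shows "l1 K (population_mix K N (\<lambda>a. pmf (P (fst a) (x a) (u a) \<mu> \<nu>1)))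
              (population_mix K N (\<lambda>a. pmf (P (fst a) (x a) (u a) \<mu> \<nu>2)))
    \<le> L * l1 K \<nu>1 \<nu>2"
proof (rule l1_population_mix_pmf_le)
  show "0 \<le> L * l1 K \<nu>1 \<nu>2" using \<open>0 \<le> L\<close> by (simp add: l1_nonneg)
  fix k j assume "k < K"
  then show "l1_pmf (P (fst (k, j)) (x (k, j)) (u (k, j)) \<mu> \<nu>1) (P (fst (k, j)) (x (k, j)) (u (k, j)) \<mu> \<nu>2)
      \<le> L * l1 K \<nu>1 \<nu>2"
    using lipschitz[of k \<mu> \<mu> \<nu>1 \<nu>2] assms(3-5) by (simp add: l1_def)
qed

lemma sum_pmf_square_le_1: "(\<Sum>x\<in>UNIV. (pmf q (x::'a::finite))\<^sup>2) \<le> 1"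
proof -
  have "(\<Sum>x\<in>UNIV. (pmf q x)\<^sup>2) \<le> (\<Sum>x\<in>UNIV. pmf q x)"
    by (intro sum_mono) (simp add: power2_eq_square mult_left_le pmf_le_1)
  also have "\<dots> = 1" by (rule sum_pmf_eq_1) auto
  finally show ?thesis .
qed

lemma is_dist_empirical:
  "Npop K N > 0 \<Longrightarrow> is_dist K (empirical K N (r :: nat \<times> nat \<Rightarrow> 'c::finite))"
  unfolding empirical_eq_population_mix by (rule is_dist_population_mix) auto

lemma expectation_l1_next_empirical_le:
  fixes P :: "nat \<Rightarrow> 'x::finite \<Rightarrow> 'u::finite \<Rightarrow> ('x \<times> nat \<Rightarrow> real) \<Rightarrow> ('u \<times> nat \<Rightarrow> real) \<Rightarrow> 'x pmf"
  assumes "Npop K N > 0" "0 \<le> L"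
    and lipschitz: "\<And>k x u mu1 mu2 nu1 nu2. k < K \<Longrightarrow> is_dist K mu1 \<Longrightarrow> is_dist K mu2 \<Longrightarrow>
           is_dist K nu1 \<Longrightarrow> is_dist K nu2 \<Longrightarrow>
           l1_pmf (P k x u mu1 nu1) (P k x u mu2 nu2) \<le> L * (l1 K mu1 mu2 + l1 K nu1 nu2)"
    and "is_dist K \<mu>" "is_dist K \<nu>"
  shows "measure_pmf.expectation
      (Pi_pmf (agents K N) d (\<lambda>a. P (fst a) (s a) (act a) \<mu> (empirical K N act)))
      (\<lambda>s'. l1 K (empirical K N s') m)
    \<le> sqrt (real CARD('x)) * (\<Sum>k<K. sqrt (real (N k))) / real (Npop K N)
      + L * l1 K (empirical K N act) \<nu>
      + l1 K (population_mix K N (\<lambda>a. pmf (P (fst a) (s a) (act a) \<mu> \<nu>))) m"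
proof -
  let ?Q = "population_mix K N (\<lambda>a. pmf (P (fst a) (s a) (act a) \<mu> (empirical K N act)))"
  let ?R = "population_mix K N (\<lambda>a. pmf (P (fst a) (s a) (act a) \<mu> \<nu>))"
  have "l1 K ?Q ?R \<le> L * l1 K (empirical K N act) \<nu>"
    by (rule l1_population_mix_kernel_le[OF \<open>0 \<le> L\<close> lipschitz])
      (auto simp: assms is_dist_empirical)
  then show ?thesis
    using expectation_l1_empirical_Pi_pmf_le[where K = K and N = N and d = d and m = m
        and q = "\<lambda>a. P (fst a) (s a) (act a) \<mu> (empirical K N act)"]
      l1_triangle[of K ?Q m ?R]
    by linarith
qed

lemma expectation_step_l1_P_MF_le:
  fixes P :: "nat \<Rightarrow> 'x::finite \<Rightarrow> 'u::finite \<Rightarrow> ('x \<times> nat \<Rightarrow> real) \<Rightarrow> ('u \<times> nat \<Rightarrow> real) \<Rightarrow> 'x pmf"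
    and pol :: "nat \<Rightarrow> nat \<Rightarrow> 'x \<Rightarrow> ('x \<times> nat \<Rightarrow> real) \<Rightarrow> 'u pmf"
  assumes npos: "Npop K N > 0" and "0 \<le> L_P"
    and lipschitz: "\<And>k x u mu1 mu2 nu1 nu2. k < K \<Longrightarrow> is_dist K mu1 \<Longrightarrow> is_dist K mu2 \<Longrightarrow>
           is_dist K nu1 \<Longrightarrow> is_dist K nu2 \<Longrightarrow>
           l1_pmf (P k x u mu1 nu1) (P k x u mu2 nu2) \<le> L_P * (l1 K mu1 mu2 + l1 K nu1 nu2)"
  shows "measure_pmf.expectation (step K N P pol t s)
           (\<lambda>s'. l1 K (empirical K N s') (P_MF K P (empirical K N s) (pol t)))
         \<le> (2 * sqrt (real CARD('x)) + L_P * sqrt (real CARD('u)))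
             * (\<Sum>k<K. sqrt (real (N k))) / real (Npop K N)"
proof -
  define \<mu> where "\<mu> = empirical K N s"
  define \<nu> where "\<nu> = nu_MF K \<mu> (pol t)"
  define mf where "mf = P_MF K P \<mu> (pol t)"
  define act_law where "act_law = Pi_pmf (agents K N) undefined (\<lambda>a. pol t (fst a) (s a) \<mu>)"
  define next_law where "next_law act = Pi_pmf (agents K N) undefined
      (\<lambda>a. P (fst a) (s a) (act a) \<mu> (empirical K N act))" for act
  define R where "R act = population_mix K N (\<lambda>a. pmf (P (fst a) (s a) (act a) \<mu> \<nu>))"
    for act :: "nat \<times> nat \<Rightarrow> 'u"
  define T where "T c = sqrt (real c) * (\<Sum>k<K. sqrt (real (N k))) / real (Npop K N)" for c
  have fin_act: "finite (set_pmf act_law)"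
    unfolding act_law_def by (rule finite_set_Pi_pmf[OF finite_agents])
  note integrable_act = integrable_measure_pmf_finite[OF fin_act]
  have \<nu>_eq: "\<nu> = population_mix K N (\<lambda>a. pmf (pol t (fst a) (s a) \<mu>))"
    unfolding \<nu>_def \<mu>_def by (rule nu_MF_empirical)
  have "is_dist K \<nu>"
    unfolding \<nu>_eq by (rule is_dist_population_mix[OF npos]) (auto intro: sum_pmf_eq_1)
  then have next_states: "measure_pmf.expectation (next_law act) (\<lambda>s'. l1 K (empirical K N s') mf)
      \<le> T CARD('x) + L_P * l1 K (empirical K N act) \<nu> + l1 K (R act) mf" for act
    unfolding next_law_def R_def T_def \<mu>_def
    by (intro expectation_l1_next_empirical_le npos \<open>0 \<le> L_P\<close> lipschitz is_dist_empirical)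
  have actions: "measure_pmf.expectation act_law (\<lambda>act. l1 K (empirical K N act) \<nu>) \<le> T CARD('u)"
    using expectation_l1_empirical_Pi_pmf_le[where K = K and N = N and d = undefined and m = \<nu>
        and q = "\<lambda>a. pol t (fst a) (s a) \<mu>"]
    unfolding act_law_def \<nu>_eq T_def by (simp add: l1_def)
  have kernels: "measure_pmf.expectation act_law (\<lambda>act. l1 K (R act) mf) \<le> T CARD('x)"
    unfolding act_law_def R_def T_def mf_def \<mu>_def P_MF_empirical \<nu>_def[unfolded \<mu>_def, symmetric]
    by (rule expectation_l1_population_mix_le) (rule sum_pmf_square_le_1)
  have "measure_pmf.expectation (step K N P pol t s) (\<lambda>s'. l1 K (empirical K N s') mf)
      = measure_pmf.expectation act_law
          (\<lambda>act. measure_pmf.expectation (next_law act) (\<lambda>s'. l1 K (empirical K N s') mf))"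
    unfolding step_def act_law_def next_law_def \<mu>_def
    by (rule expectation_bind_pmf_finite) (auto intro: finite_set_Pi_pmf finite_agents)
  also have "\<dots> \<le> measure_pmf.expectation act_law
      (\<lambda>act. T CARD('x) + L_P * l1 K (empirical K N act) \<nu> + l1 K (R act) mf)"
    by (intro integral_mono next_states integrable_act)
  also have "\<dots> = T CARD('x) + L_P * measure_pmf.expectation act_law (\<lambda>act. l1 K (empirical K N act) \<nu>)
      + measure_pmf.expectation act_law (\<lambda>act. l1 K (R act) mf)"
    by (simp add: integrable_act)
  also have "\<dots> \<le> T CARD('x) + L_P * T CARD('u) + T CARD('x)"
    using actions kernels \<open>0 \<le> L_P\<close> by (intro add_mono mult_left_mono) auto
  finally show ?thesis
    unfolding mf_def \<mu>_def T_def by (simp add: algebra_simps add_divide_distrib)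
qed

lemma finite_set_pmf_step:
  fixes P :: "nat \<Rightarrow> 'x::finite \<Rightarrow> 'u::finite \<Rightarrow> ('x \<times> nat \<Rightarrow> real) \<Rightarrow> ('u \<times> nat \<Rightarrow> real) \<Rightarrow> 'x pmf"
  shows "finite (set_pmf (step K N P pol t s))"
  unfolding step_def by (auto intro!: finite_set_Pi_pmf finite_agents)

theorem lemma8:
  fixes K :: nat and N :: "nat \<Rightarrow> nat" and L_P :: real
    and P :: "nat \<Rightarrow> 'x::finite \<Rightarrow> 'u::finite \<Rightarrow> ('x \<times> nat \<Rightarrow> real) \<Rightarrow> ('u \<times> nat \<Rightarrow> real) \<Rightarrow> 'x pmf"
    and pol :: "nat \<Rightarrow> nat \<Rightarrow> 'x \<Rightarrow> ('x \<times> nat \<Rightarrow> real) \<Rightarrow> 'u pmf"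
    and init :: "(nat \<times> nat \<Rightarrow> 'x) pmf"
    and t :: nat
  assumes "K \<ge> 1"
    and "\<And>k. k < K \<Longrightarrow> N k \<ge> 1"
    and "L_P > 0"
    and "\<And>k x u mu1 mu2 nu1 nu2. k < K \<Longrightarrow> is_dist K mu1 \<Longrightarrow> is_dist K mu2 \<Longrightarrow>
           is_dist K nu1 \<Longrightarrow> is_dist K nu2 \<Longrightarrow>
           l1_pmf (P k x u mu1 nu1) (P k x u mu2 nu2) \<le> L_P * (l1 K mu1 mu2 + l1 K nu1 nu2)"
  shows "measure_pmf.expectation (pair_law K N P pol init t)
           (\<lambda>(s, s'). l1 K (empirical K N s') (P_MF K P (empirical K N s) (pol t)))
         \<le> (2 + L_P) * sqrt (real (CARD('x) * CARD('u))) * (1 / real (Npop K N))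
             * (\<Sum>k<K. sqrt (real (N k)))"
proof -
  define C where "C = (2 + L_P) * sqrt (real (CARD('x) * CARD('u))) * (1 / real (Npop K N))
      * (\<Sum>k<K. sqrt (real (N k)))"
  have "N 0 \<le> Npop K N" using assms(1) unfolding Npop_def by (intro member_le_sum) auto
  then have npos: "Npop K N > 0" using assms(1,2) by fastforce
  have "sqrt (real CARD('x)) \<le> sqrt (real (CARD('x) * CARD('u)))"
    and "sqrt (real CARD('u)) \<le> sqrt (real (CARD('x) * CARD('u)))"
    by (intro real_sqrt_le_mono; simp)+
  then have "2 * sqrt (real CARD('x)) + L_P * sqrt (real CARD('u))
      \<le> (2 + L_P) * sqrt (real (CARD('x) * CARD('u)))"
    using assms(3) by (simp add: distrib_right add_mono mult_left_mono del: of_nat_mult)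
  then have constant_le: "(2 * sqrt (real CARD('x)) + L_P * sqrt (real CARD('u)))
      * (\<Sum>k<K. sqrt (real (N k))) / real (Npop K N) \<le> C"
    unfolding C_def by (simp add: divide_right_mono mult_right_mono sum_nonneg)
  have step_le: "measure_pmf.expectation (step K N P pol t s)
      (\<lambda>s'. l1 K (empirical K N s') (P_MF K P (empirical K N s) (pol t))) \<le> C" for s
    by (rule order_trans[OF expectation_step_l1_P_MF_le[OF npos] constant_le])
      (use assms(3,4) in auto)
  have "0 \<le> C" unfolding C_def using assms(3) by (intro mult_nonneg_nonneg sum_nonneg) auto
  then show ?thesis
    unfolding pair_law_def C_def[symmetric]
    by (rule expectation_bind_pmf_le[rotated])
      (use step_le in \<open>auto simp: l1_nonneg integrable_measure_pmf_finite finite_set_pmf_step\<close>)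
qed

end
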